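(* Let $A$ and $I$ be finite sets. In the group $\langle\mathcal P(I)\rangle^{\otimes A}$ one has $$\sum_{J\in\mathcal P(I)}(-1)^{|I|-|J|}\bigotimes_{a\in A}\langle J\rangle=\sum_{k\in\mathcal R(A,I)}\ \bigotimes_{a\in A}\ \sum_{J\in\mathcal P(k(a))}(-1)^{|k(a)|-|J|}\langle J\rangle.$$
   Context: $\mathcal P(I)$ is the set of all subsets of $I$; $\langle\mathcal P(I)\rangle$ is the free abelian group with basis $\{\langle J\rangle: J\in\mathcal P(I)\}$, and $\langle\mathcal P(I)\rangle^{\otimes A}$ is the tensor product over $\mathbb Z$ of copies of it indexed by $A$. $\mathcal R(A,I)$ is the set of functions $k\colon A\to\mathcal P(I)$ with $\bigcup_{a\in A}k(a)=I$. *)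

theory Defs
  imports Main "HOL-Library.FuncSet"
begin

text \<open>Elements of the free abelian group with basis P(I) are represented by their
  coefficient functions 'i set => int (finitely supported; for finite I the support
  is automatically inside Pow I).\<close>

definition gen :: "'i set \<Rightarrow> ('i set \<Rightarrow> int)" where
  "gen J = (\<lambda>K. if K = J then 1 else 0)"

text \<open>The tensor power over Z indexed by A of a free abelian group with basis B is the
  free abelian group with basis the functions A -> B; we represent its elements by
  coefficient functions on extensional functions ('a => 'i set) => int.  The pure tensor
  of a family x (a in A) is the multilinear extension of the basis identification.\<close>

definition ptensor :: "'a set \<Rightarrow> ('a \<Rightarrow> ('i set \<Rightarrow> int)) \<Rightarrow> (('a \<Rightarrow> 'i set) \<Rightarrow> int)" where
  "ptensor A x = (\<lambda>f. if f \<in> extensional A then (\<Prod>a\<in>A. x a (f a)) else 0)"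

definition Rset :: "'a set \<Rightarrow> 'i set \<Rightarrow> ('a \<Rightarrow> 'i set) set" where
  "Rset A I = {k \<in> A \<rightarrow>\<^sub>E Pow I. (\<Union>a\<in>A. k a) = I}"

end

theory Submission
  imports Defs
begin

text \<open>Moebius inversion on the Boolean lattice, used in both directions. Put
  e(S) = sum over J \<subseteq> S of (-1)^(|S|-|J|) <J>; then <J> is the sum of the e(S) over
  S \<subseteq> J, and expanding the tensor product writes the pure tensor of the <J> as the sum,
  over all k : A \<rightarrow> P(J), of the pure tensors of the e(k a). Grouping the k by their
  union S \<subseteq> J shows that this pure tensor is the sum over S \<subseteq> J of G(S), the right-hand
  side of the theorem with S in place of I; inverting this relation gives the theorem.\<close>

lemma inclusion_exclusion_mobius_converse:
  fixes g :: "'a set \<Rightarrow> 'b::ring_1"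
  assumes "finite S"
  shows "g S = (\<Sum>T\<in>Pow S. \<Sum>U\<in>Pow T. (-1) ^ (card T - card U) * g U)"
proof -
  define f where "f T = (\<Sum>U\<in>Pow T. (-1) ^ (card T - card U) * g U)" for T
  have sign: "(-1) ^ n * (-1) ^ (n - k) = ((-1) ^ k :: 'b)" if "k \<le> n" for n k
    using that by (simp add: minus_one_power_iff flip: neg_one_power_add_eq_neg_one_power_diff power_add)
  have "(-1) ^ card T * f T = (\<Sum>U\<in>Pow T. (-1) ^ card U * g U)" if "finite T" for T
    unfolding f_def sum_distrib_left
    by (rule sum.cong) (use that in \<open>auto simp: card_mono sign mult.assoc [symmetric]\<close>)
  then have "g S = (\<Sum>T\<in>Pow S. (-1) ^ card T * ((-1) ^ card T * f T))"
    by (rule inclusion_exclusion_symmetric [where g = "\<lambda>T. (-1) ^ card T * f T", OF _ assms])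
  then show ?thesis
    by (simp add: f_def flip: mult.assoc power_add)
qed

lemma sum_PiE_Pow_eq_sum_Rset:
  assumes "finite A" "finite J"
  shows "(\<Sum>k\<in>A \<rightarrow>\<^sub>E Pow J. h k) = (\<Sum>S\<in>Pow J. \<Sum>k\<in>Rset A S. h k)"
proof -
  have "{k \<in> A \<rightarrow>\<^sub>E Pow J. (\<Union>a\<in>A. k a) = S} = Rset A S" if "S \<in> Pow J" for S
    using that by (auto simp: Rset_def)
  moreover have "(\<lambda>k. \<Union>a\<in>A. k a) ` (A \<rightarrow>\<^sub>E Pow J) \<subseteq> Pow J"
    by auto
  ultimately show ?thesis
    using sum.group [of "A \<rightarrow>\<^sub>E Pow J" "Pow J" "\<lambda>k. \<Union>a\<in>A. k a" h] assms
    by (simp add: finite_PiE)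
qed

lemma prod_sum_Pow_eq_sum_Rset:
  fixes g :: "'a \<Rightarrow> 'i set \<Rightarrow> 'b::comm_semiring_1"
  assumes "finite A" "finite J"
  shows "(\<Prod>a\<in>A. \<Sum>S\<in>Pow J. g a S) = (\<Sum>S\<in>Pow J. \<Sum>k\<in>Rset A S. \<Prod>a\<in>A. g a (k a))"
  using assms by (simp add: prod_sum_PiE sum_PiE_Pow_eq_sum_Rset)

theorem lemma15p1:
  fixes A :: "'a set" and I :: "'i set"
  assumes "finite A" and "finite I"
  shows "(\<lambda>f. \<Sum>J\<in>Pow I. (-1) ^ (card I - card J) * ptensor A (\<lambda>a. gen J) f)
       = (\<lambda>f. \<Sum>k\<in>Rset A I.
            ptensor A (\<lambda>a. (\<lambda>K. \<Sum>J\<in>Pow (k a). (-1) ^ (card (k a) - card J) * gen J K)) f)"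
proof
  fix f :: "'a \<Rightarrow> 'i set"
  show "(\<Sum>J\<in>Pow I. (-1) ^ (card I - card J) * ptensor A (\<lambda>a. gen J) f)
       = (\<Sum>k\<in>Rset A I.
            ptensor A (\<lambda>a. (\<lambda>K. \<Sum>J\<in>Pow (k a). (-1) ^ (card (k a) - card J) * gen J K)) f)"
  proof (cases "f \<in> extensional A")
    case False
    then show ?thesis by (simp add: ptensor_def)
  next
    case True
    define e :: "'i set \<Rightarrow> 'i set \<Rightarrow> int"
      where "e S K = (\<Sum>J\<in>Pow S. (-1) ^ (card S - card J) * gen J K)" for S K
    define G where "G S = (\<Sum>k\<in>Rset A S. \<Prod>a\<in>A. e (k a) (f a))" for S
    have "(\<Prod>a\<in>A. gen J (f a)) = sum G (Pow J)" if "finite J" for J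
    proof -
      have "gen J K = (\<Sum>S\<in>Pow J. e S K)" for K
        unfolding e_def by (rule inclusion_exclusion_mobius_converse [OF that])
      then have "(\<Prod>a\<in>A. gen J (f a)) = (\<Prod>a\<in>A. \<Sum>S\<in>Pow J. e S (f a))"
        by simp
      also have "\<dots> = sum G (Pow J)"
        unfolding G_def by (rule prod_sum_Pow_eq_sum_Rset [OF \<open>finite A\<close> that])
      finally show ?thesis .
    qed
    then have "G I = (\<Sum>J\<in>Pow I. (-1) ^ (card I - card J) * (\<Prod>a\<in>A. gen J (f a)))"
      by (rule inclusion_exclusion_mobius [OF _ \<open>finite I\<close>])
    then show ?thesis
      using True by (simp add: ptensor_def G_def e_def)
  qed
qed

end
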